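(* Consider the following model. Fix $n\ge 1$, a vector $\mu\in\mathbb R^n$, $n\times n$ matrices $A,B,C$, a positive definite initial covariance matrix $\Sigma_0$, and an initial price vector $\vec S_0=(S_0^1,\dots,S_0^n)^\top$ with positive entries. Returns and covariances evolve by $$R_{t+1}=\mu+Z_{t+1},\qquad \Sigma_{t+1}=CC^\top+A\Sigma_tA^\top+BZ_{t+1}Z_{t+1}^\top B^\top,$$ where, conditionally on the past, $Z_{t+1}$ has mean $0$ and covariance $\Sigma_t$. Prices evolve by $S^i_{t+1}=h(S^i_t,R^i_{t+1})$ for $1\le i\le n$, for a given function $h$. Set $\Psi_t=\mathrm{diag}(\vec S_t)$ and $P_t=\Psi_t\Sigma_t\Psi_t$. Let $\gamma>0$, $\epsilon>0$, and let $q:\mathbb R^n\times\mathbb R^{n\times n}\to\mathbb R^+$ be a given function. Define $\widetilde P_t=\frac{\gamma}{\epsilon q(\vec S_t,P_t)}P_t$. Assume: (i) $C$ has full rank, so that $c:=\inf_{\|v\|=1}v^\top CC^\top v>0$; (ii) $\|h\|_\infty=\sup_{s,r}|h(s,r)|<\infty$, and there is a constant $\underline s>0$ with $\inf_{s,r}h(s,r)\ge \underline s$; (iii) there is a constant $\chi<\infty$ with $1\le q(s,p)\le\chi$ for all $(s,p)\in\mathbb R^n\times\mathbb R^{n\times n}$. If $\epsilon\chi\|h\|_\infty<\gamma\underline s^2c$, then, writing $\kappa=\chi\|h\|_\infty/(\gamma\underline s^2c)$, $$\sup_t\left\|\left(I+\widetilde P_t\Psi_t^{-1}\right)^{-1}\right\|\le\frac{\epsilon\kappa}{1-\epsilon^2\kappa^2}.$$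 Consequently, for any $\delta\in[0,1)$ and all $\epsilon>0$ small enough, there is a constant $\Delta(\epsilon)<1$ such that $\delta\|(I+\widetilde P_t\Psi_t^{-1})^{-1}\|\le\Delta(\epsilon)$ for all $t$.
   Context: $\|\cdot\|$ denotes the Euclidean norm on vectors and the induced operator (spectral) norm on matrices. $\mathrm{diag}(\vec S_t)$ is the diagonal matrix whose diagonal entries are the entries of $\vec S_t$. *)

theory Defs
  imports "HOL-Analysis.Analysis"
begin

definition diag_mat :: "real^'n \<Rightarrow> real^'n^'n" where
  "diag_mat s = (\<chi> i j. if i = j then s $ i else 0)"

definition outer :: "real^'n \<Rightarrow> real^'n^'n" where
  "outer z = (\<chi> i j. z $ i * z $ j)"

definition opnorm :: "real^'n^'n \<Rightarrow> real" where
  "opnorm M = onorm (\<lambda>x. M *v x)"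

definition pos_def_mat :: "real^'n^'n \<Rightarrow> bool" where
  "pos_def_mat M \<longleftrightarrow> transpose M = M \<and> (\<forall>v. v \<noteq> 0 \<longrightarrow> v \<bullet> (M *v v) > 0)"

definition cmin :: "real^'n^'n \<Rightarrow> real" where
  "cmin C = Inf ((\<lambda>v. v \<bullet> ((C ** transpose C) *v v)) ` {v. norm v = 1})"

definition hsup :: "(real \<Rightarrow> real \<Rightarrow> real) \<Rightarrow> real" where
  "hsup h = (SUP p. \<bar>h (fst p) (snd p)\<bar>)"

end

theory Submission
  imports Defs
begin

text \<open>For t \<ge> 1 the covariance Sigma_t dominates C C^T, so v^T Sigma_t v \<ge> c |v|^2, and every price
  is at least the lower bound s of h. Since the matrix Ptilde_t Psi_t^-1 equals a Psi_t Sigma_t with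
  a = gamma / (eps q), pairing (I + a Psi Sigma) x with Psi^-1 x gives at least a c |x|^2, while
  |Psi^-1 x| \<le> |x| / s. Hence |(I + a Psi Sigma) x| \<ge> a c s |x|, and the inverse has norm at most
  eps q / (gamma c s) \<le> eps chi / (gamma c s) \<le> eps kappa, because the sup norm of h is at least s.\<close>

lemma matrix_inv_right:
  fixes A :: "'a::field^'n^'n"
  assumes "invertible A"
  shows "A ** matrix_inv A = mat 1"
proof -
  have "A ** matrix_inv A = mat 1 \<and> matrix_inv A ** A = mat 1"
    using assms unfolding invertible_def matrix_inv_def by (rule someI_ex)
  then show ?thesis ..
qed

lemma diag_mat_mult: "diag_mat d ** diag_mat e = diag_mat (\<chi> i. d $ i * e $ i)"
proof -
  have "(\<Sum>k\<in>UNIV. (if i = k then d $ i else 0) * (if k = j then e $ k else 0))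
      = (\<Sum>k\<in>UNIV. if k = i then (if i = j then d $ i * e $ i else 0) else 0)" for i j
    by (rule sum.cong) auto
  then show ?thesis
    unfolding diag_mat_def matrix_matrix_mult_def by (simp add: vec_eq_iff)
qed

lemma diag_mat_one: "diag_mat (\<chi> i. 1) = mat 1"
  unfolding diag_mat_def mat_def by (simp add: vec_eq_iff)

lemma invertible_diag_mat:
  assumes "\<forall>i. d $ i \<noteq> (0::real)"
  shows "invertible (diag_mat d)"
  unfolding invertible_def
  using assms by (intro exI[of _ "diag_mat (\<chi> i. 1 / d $ i)"]) (simp add: diag_mat_mult diag_mat_one[symmetric])

lemma diag_mat_mult_vec: "diag_mat d *v x = (\<chi> i. d $ i * x $ i)"
proof -
  have "(\<Sum>k\<in>UNIV. (if i = k then d $ i else 0) * x $ k) = (\<Sum>k\<in>UNIV. if k = i then d $ i * x $ i else 0)" for i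
    by (rule sum.cong) auto
  then show ?thesis
    unfolding diag_mat_def matrix_vector_mult_def by (simp add: vec_eq_iff)
qed

lemma quadratic_form_congruence:
  fixes P Q :: "real^'n^'n"
  shows "x \<bullet> ((P ** Q ** transpose P) *v x) = (transpose P *v x) \<bullet> (Q *v (transpose P *v x))"
proof -
  have "x \<bullet> ((P ** Q ** transpose P) *v x) = x \<bullet> (P *v (Q *v (transpose P *v x)))"
    by (simp add: matrix_vector_mul_assoc[symmetric] matrix_mul_assoc)
  also have "\<dots> = (x v* P) \<bullet> (Q *v (transpose P *v x))"
    by (simp add: dot_lmul_matrix)
  also have "x v* P = transpose P *v x"
    by (metis transpose_transpose vector_transpose_matrix)
  finally show ?thesis .
qed

lemma quadratic_form_gram:
  fixes C :: "real^'n^'n"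
  shows "v \<bullet> ((C ** transpose C) *v v) = (norm (transpose C *v v))\<^sup>2"
  using quadratic_form_congruence[of v C "mat 1"] by (simp add: matrix_mul_rid power2_norm_eq_inner)

lemma quadratic_form_outer: "x \<bullet> (outer z *v x) = (z \<bullet> x)\<^sup>2"
proof -
  have "outer z *v x = (z \<bullet> x) *\<^sub>R z"
    unfolding outer_def matrix_vector_mult_def
    by (simp add: vec_eq_iff inner_vec_def sum_distrib_left mult.commute mult.left_commute)
  then show ?thesis by (simp add: power2_eq_square inner_commute)
qed

lemma norm_divide_entries_le:
  fixes d x :: "real^'n"
  assumes d: "\<forall>i. s \<le> d $ i" and s: "0 < s"
  shows "norm (\<chi> i. x $ i / d $ i) \<le> norm x / s"
proof -
  have "norm (\<chi> i. x $ i / d $ i) \<le> norm ((1 / s) *\<^sub>R x)"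
  proof (rule norm_le_componentwise_cart)
    fix i
    have d_i: "0 < d $ i"
      using d s by (meson less_le_trans)
    moreover have "\<bar>x $ i\<bar> / d $ i \<le> \<bar>x $ i\<bar> / s"
      using d s d_i by (intro divide_left_mono) auto
    ultimately show "norm ((\<chi> i. x $ i / d $ i) $ i) \<le> norm (((1 / s) *\<^sub>R x) $ i)"
      using s by (simp add: abs_div)
  qed
  then show ?thesis using s by simp
qed

lemma norm_resolvent_lower:
  fixes d x :: "real^'n" and Sg :: "real^'n^'n"
  assumes d: "\<forall>i. s \<le> d $ i" and s: "0 < s"
    and Sg: "\<forall>v. c * (norm v)\<^sup>2 \<le> v \<bullet> (Sg *v v)"
  shows "c * s * norm x \<le> norm ((mat 1 + diag_mat d ** Sg) *v x)"
proof -
  define u where "u = (\<chi> i. x $ i / d $ i)"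
  define w where "w = (mat 1 + diag_mat d ** Sg) *v x"
  have d_pos: "0 < d $ i" for i
    using d s by (meson less_le_trans)
  have "u \<bullet> w = (\<Sum>i\<in>UNIV. (x $ i)\<^sup>2 / d $ i + x $ i * (Sg *v x) $ i)"
    unfolding u_def w_def inner_vec_def
    using d_pos by (intro sum.cong) (simp_all add: less_imp_neq[symmetric] matrix_vector_mult_add_rdistrib
        matrix_vector_mul_assoc[symmetric] diag_mat_mult_vec field_simps power2_eq_square)
  also have "\<dots> = (\<Sum>i\<in>UNIV. (x $ i)\<^sup>2 / d $ i) + x \<bullet> (Sg *v x)"
    by (simp add: sum.distrib inner_vec_def)
  finally have "x \<bullet> (Sg *v x) \<le> u \<bullet> w"
    using d_pos by (simp add: sum_nonneg less_imp_le)
  then have "c * (norm x)\<^sup>2 \<le> u \<bullet> w"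
    using Sg order_trans by blast
  also have "\<dots> \<le> norm u * norm w"
    by (rule norm_cauchy_schwarz)
  also have "\<dots> \<le> norm x / s * norm w"
    unfolding u_def using norm_divide_entries_le[OF d s] by (rule mult_right_mono) simp
  finally have "norm x * (c * s * norm x) \<le> norm x * norm w"
    using s by (simp add: power2_eq_square field_simps)
  then show ?thesis
    unfolding w_def by (cases "x = 0") auto
qed

lemma opnorm_matrix_inv_le:
  fixes M :: "real^'n^'n"
  assumes K: "0 < K" and lower: "\<forall>x. K * norm x \<le> norm (M *v x)"
  shows "opnorm (matrix_inv M) \<le> 1 / K"
proof -
  have "\<forall>x. M *v x = 0 \<longrightarrow> x = 0"
    using lower K by (metis mult_le_0_iff norm_le_zero_iff not_less norm_zero)
  then have "invertible M"
    by (simp add: invertible_left_inverse matrix_left_invertible_ker)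
  then have M_inv: "M ** matrix_inv M = mat 1"
    by (rule matrix_inv_right)
  show ?thesis
    unfolding opnorm_def
  proof (rule onorm_le)
    fix y
    have "K * norm (matrix_inv M *v y) \<le> norm y"
      using lower M_inv by (metis matrix_vector_mul_assoc matrix_vector_mul_lid)
    then show "norm (matrix_inv M *v y) \<le> 1 / K * norm y"
      using K by (simp add: field_simps)
  qed
qed

lemma cmin_le_quadratic_form:
  fixes C :: "real^'n^'n"
  shows "cmin C * (norm x)\<^sup>2 \<le> x \<bullet> ((C ** transpose C) *v x)"
proof (cases "x = 0")
  case False
  let ?f = "\<lambda>v. v \<bullet> ((C ** transpose C) *v v)"
  define v where "v = (1 / norm x) *\<^sub>R x"
  have "bdd_below (?f ` {v. norm v = 1})"
    by (rule bdd_belowI[of _ 0]) (auto simp: quadratic_form_gram)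
  moreover have "norm v = 1"
    using False by (simp add: v_def)
  ultimately have "cmin C \<le> ?f v"
    unfolding cmin_def by (intro cInf_lower) auto
  moreover have "?f x = (norm x)\<^sup>2 * ?f v"
    using False by (simp add: v_def matrix_vector_mult_scaleR power2_eq_square field_simps)
  ultimately show ?thesis
    by (metis mult.commute mult_left_mono zero_le_power2)
qed simp

lemma cmin_pos:
  fixes C :: "real^'n^'n"
  assumes "rank C = CARD('n)"
  shows "0 < cmin C"
proof -
  let ?f = "\<lambda>v. v \<bullet> ((C ** transpose C) *v v)"
  have "compact (sphere (0::real^'n) 1)" "sphere (0::real^'n) 1 \<noteq> {}"
    by simp_all
  moreover have "continuous_on (sphere 0 1) ?f"
    by (intro continuous_intros)
  ultimately obtain v0 where v0: "v0 \<in> sphere 0 1" and min: "\<forall>v\<in>sphere 0 1. ?f v0 \<le> ?f v"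
    using continuous_attains_inf by blast
  have sphere: "{v. norm v = 1} = sphere (0::real^'n) 1"
    by auto
  have "cmin C = ?f v0"
    unfolding cmin_def sphere
  proof (rule antisym)
    show "Inf (?f ` sphere 0 1) \<le> ?f v0"
      using v0 by (intro cInf_lower bdd_belowI[of _ 0]) (auto simp: quadratic_form_gram)
    show "?f v0 \<le> Inf (?f ` sphere 0 1)"
      using v0 min by (intro cInf_greatest) auto
  qed
  moreover have "inj ((*v) (transpose C))"
    using assms full_rank_injective rank_transpose by metis
  then have "transpose C *v v0 \<noteq> 0"
    using v0 by (metis matrix_vector_mult_0_right injD mem_sphere_0 zero_neq_one norm_zero)
  ultimately show ?thesis
    by (simp add: quadratic_form_gram)
qed

lemma covariance_update_ge_gram:
  fixes A B C Sg :: "real^'n^'n"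
  assumes Sg: "\<forall>v. 0 \<le> v \<bullet> (Sg *v v)"
  shows "v \<bullet> ((C ** transpose C) *v v)
    \<le> v \<bullet> ((C ** transpose C + A ** Sg ** transpose A + B ** outer z ** transpose B) *v v)"
proof -
  have "0 \<le> v \<bullet> ((A ** Sg ** transpose A) *v v)"
    using Sg by (simp add: quadratic_form_congruence)
  moreover have "0 \<le> v \<bullet> ((B ** outer z ** transpose B) *v v)"
    by (simp add: quadratic_form_congruence quadratic_form_outer)
  ultimately show ?thesis
    by (simp add: matrix_vector_mult_add_rdistrib inner_add_right)
qed

lemma covariance_ge_cmin:
  fixes A B C :: "real^'n^'n" and Sig :: "nat \<Rightarrow> real^'n^'n" and Z :: "nat \<Rightarrow> real^'n"
  assumes Sig_0: "pos_def_mat (Sig 0)"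
    and Sig_Suc: "\<forall>t. Sig (Suc t) = C ** transpose C + A ** Sig t ** transpose A
                        + B ** outer (Z (Suc t)) ** transpose B"
  shows "cmin C * (norm v)\<^sup>2 \<le> v \<bullet> (Sig (Suc t) *v v)"
proof -
  have psd: "\<forall>v. 0 \<le> v \<bullet> (Sig t *v v)" for t
  proof (induction t)
    case 0
    show ?case
      using Sig_0 unfolding pos_def_mat_def by (metis inner_zero_left order_le_less)
  next
    case (Suc t)
    show ?case
    proof
      fix v
      have "0 \<le> v \<bullet> ((C ** transpose C) *v v)"
        by (simp add: quadratic_form_gram)
      also have "\<dots> \<le> v \<bullet> (Sig (Suc t) *v v)"
        using covariance_update_ge_gram[OF Suc.IH] Sig_Suc by simp
      finally show "0 \<le> v \<bullet> (Sig (Suc t) *v v)" .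
    qed
  qed
  have "v \<bullet> ((C ** transpose C) *v v) \<le> v \<bullet> (Sig (Suc t) *v v)"
    using covariance_update_ge_gram[OF psd] Sig_Suc by simp
  with cmin_le_quadratic_form show ?thesis
    by (rule order_trans)
qed

lemma opnorm_inv_resolvent_le:
  fixes d :: "real^'n" and Sg :: "real^'n^'n"
  assumes d: "\<forall>i. s \<le> d $ i" and s: "0 < s" and a: "0 < a" and c: "0 < c"
    and Sg: "\<forall>v. c * (norm v)\<^sup>2 \<le> v \<bullet> (Sg *v v)"
  shows "opnorm (matrix_inv (mat 1 + (a *\<^sub>R (diag_mat d ** Sg ** diag_mat d)) ** matrix_inv (diag_mat d)))
    \<le> 1 / (a * c * s)"
proof -
  have "invertible (diag_mat d)"
    using d s by (intro invertible_diag_mat) (metis less_le_trans less_irrefl)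
  then have "(a *\<^sub>R (diag_mat d ** Sg ** diag_mat d)) ** matrix_inv (diag_mat d) = diag_mat d ** (a *\<^sub>R Sg)"
    by (simp add: scalar_matrix_assoc[symmetric] matrix_scalar_ac matrix_mul_assoc[symmetric] matrix_inv_right matrix_mul_rid)
  moreover have "\<forall>v. (a * c) * (norm v)\<^sup>2 \<le> v \<bullet> ((a *\<^sub>R Sg) *v v)"
    using Sg a by (simp add: scaleR_matrix_vector_assoc[symmetric] mult.assoc)
  then have "\<forall>x. (a * c * s) * norm x \<le> norm ((mat 1 + diag_mat d ** (a *\<^sub>R Sg)) *v x)"
    using norm_resolvent_lower[OF d s] by blast
  then have "opnorm (matrix_inv (mat 1 + diag_mat d ** (a *\<^sub>R Sg))) \<le> 1 / (a * c * s)"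
    using a c s by (intro opnorm_matrix_inv_le) simp_all
  ultimately show ?thesis
    by simp
qed

lemma opnorm_inv_resolvent_le_eps:
  fixes d :: "real^'n" and Sg :: "real^'n^'n"
  assumes d: "\<forall>i. s \<le> d $ i" and s: "0 < s" and c: "0 < c"
    and Sg: "\<forall>v. c * (norm v)\<^sup>2 \<le> v \<bullet> (Sg *v v)"
    and gamma: "0 < gamma" and eps: "0 < eps" and q: "1 \<le> q" "q \<le> chi"
  shows "opnorm (matrix_inv (mat 1 + ((gamma / (eps * q)) *\<^sub>R (diag_mat d ** Sg ** diag_mat d))
      ** matrix_inv (diag_mat d))) \<le> eps * chi / (gamma * c * s)"
proof -
  have "0 < gamma / (eps * q)"
    using gamma eps q by simp
  then have "opnorm (matrix_inv (mat 1 + ((gamma / (eps * q)) *\<^sub>R (diag_mat d ** Sg ** diag_mat d))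
      ** matrix_inv (diag_mat d))) \<le> 1 / (gamma / (eps * q) * c * s)"
    using opnorm_inv_resolvent_le[OF d s _ c Sg] by blast
  also have "\<dots> = eps * q / (gamma * c * s)"
    using eps q by simp
  also have "\<dots> \<le> eps * chi / (gamma * c * s)"
    using eps q gamma c s by (intro divide_right_mono mult_left_mono) auto
  finally show ?thesis .
qed

lemma uniform_contraction_for_small_eps:
  fixes N :: "real \<Rightarrow> nat \<Rightarrow> real"
  assumes K: "0 < K" and N: "\<And>eps t. 0 < eps \<Longrightarrow> 1 \<le> t \<Longrightarrow> N eps t \<le> eps * K"
    and delta: "0 \<le> delta" "delta < 1"
  shows "\<exists>eps0>0. \<forall>eps. 0 < eps \<and> eps < eps0 \<longrightarrow> (\<exists>Delta<1. \<forall>t\<ge>1. delta * N eps t \<le> Delta)"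
proof (rule exI[of _ "1 / K"], intro conjI allI impI)
  fix eps :: real
  assume eps: "0 < eps \<and> eps < 1 / K"
  have "delta * N eps t \<le> delta" if "1 \<le> t" for t
  proof -
    have "N eps t \<le> 1"
      using N[of eps t] eps K that by (simp add: field_simps)
    then show ?thesis
      using delta(1) by (simp add: mult_left_le)
  qed
  with delta(2) show "\<exists>Delta<1. \<forall>t\<ge>1. delta * N eps t \<le> Delta"
    by blast
qed (use K in simp)

lemma abs_le_hsup:
  assumes "bdd_above (range (\<lambda>p. \<bar>h (fst p) (snd p)\<bar>))"
  shows "\<bar>h x y\<bar> \<le> hsup h"
  unfolding hsup_def using cSUP_upper[OF UNIV_I assms, of "(x, y)"] by simp

lemma le_kappa_div_one_minus_square:
  fixes eps chi H gamma c s :: real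
  assumes "0 < eps" "0 \<le> chi" "0 < gamma" "0 < c" "0 < s" "s \<le> H"
    and small: "eps * chi * H < gamma * s\<^sup>2 * c"
  defines "kappa \<equiv> chi * H / (gamma * s\<^sup>2 * c)"
  shows "eps * chi / (gamma * c * s) \<le> eps * kappa / (1 - eps\<^sup>2 * kappa\<^sup>2)"
proof -
  have "eps * chi / (gamma * c * s) = eps * chi * s / (gamma * s\<^sup>2 * c)"
    using assms by (simp add: power2_eq_square)
  also have "\<dots> \<le> eps * chi * H / (gamma * s\<^sup>2 * c)"
    using assms by (intro divide_right_mono mult_left_mono) auto
  also have "\<dots> = eps * kappa"
    by (simp add: kappa_def)
  also have "eps * kappa \<le> eps * kappa / (1 - (eps * kappa)\<^sup>2)"
  proof -
    have "0 \<le> eps * kappa" "eps * kappa < 1"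
      unfolding kappa_def using assms by (simp_all add: field_simps)
    then have "0 < 1 - (eps * kappa)\<^sup>2" "1 - (eps * kappa)\<^sup>2 \<le> 1"
      by (simp_all add: abs_square_less_1)
    with \<open>0 \<le> eps * kappa\<close> show ?thesis
      by (simp add: le_divide_eq mult_left_le)
  qed
  finally show ?thesis
    by (simp add: power_mult_distrib)
qed

theorem proposition1:
  fixes mu :: "real^'n"
    and A B C Sigma0 :: "real^'n^'n"
    and S0 :: "real^'n"
    and h :: "real \<Rightarrow> real \<Rightarrow> real"
    and q :: "real^'n \<Rightarrow> real^'n^'n \<Rightarrow> real"
    and gamma chi slow :: real
    and Z R S :: "nat \<Rightarrow> real^'n"
    and Sig :: "nat \<Rightarrow> real^'n^'n"
  assumes Sigma0_pd: "pos_def_mat Sigma0"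
    and S0_pos: "\<forall>i. S0 $ i > 0"
    and gamma_pos: "gamma > 0"
    and Sig_0: "Sig 0 = Sigma0"
    and Sig_Suc: "\<forall>t. Sig (Suc t) = C ** transpose C + A ** Sig t ** transpose A
                        + B ** outer (Z (Suc t)) ** transpose B"
    and R_Suc: "\<forall>t. R (Suc t) = mu + Z (Suc t)"
    and S_0: "S 0 = S0"
    and S_Suc: "\<forall>t i. S (Suc t) $ i = h (S t $ i) (R (Suc t) $ i)"
    and C_rank: "rank C = CARD('n)"
    and h_bdd: "bdd_above (range (\<lambda>p. \<bar>h (fst p) (snd p)\<bar>))"
    and slow_pos: "slow > 0"
    and h_low: "\<forall>s r. h s r \<ge> slow"
    and q_bounds: "\<forall>s p. 1 \<le> q s p \<and> q s p \<le> chi"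
  shows
    "(\<forall>eps. eps > 0 \<and> eps * chi * hsup h < gamma * slow\<^sup>2 * cmin C \<longrightarrow>
        (let kappa = chi * hsup h / (gamma * slow\<^sup>2 * cmin C) in
         \<forall>t\<ge>1. opnorm (matrix_inv (mat 1 +
                  ((gamma / (eps * q (S t) (diag_mat (S t) ** Sig t ** diag_mat (S t))))
                     *\<^sub>R (diag_mat (S t) ** Sig t ** diag_mat (S t)))
                  ** matrix_inv (diag_mat (S t))))
               \<le> eps * kappa / (1 - eps\<^sup>2 * kappa\<^sup>2)))
     \<and> (\<forall>delta. 0 \<le> delta \<and> delta < 1 \<longrightarrow>
        (\<exists>eps0>0. \<forall>eps. 0 < eps \<and> eps < eps0 \<longrightarrow>
          (\<exists>Delta<1. \<forall>t\<ge>1. delta * opnorm (matrix_inv (mat 1 +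
                  ((gamma / (eps * q (S t) (diag_mat (S t) ** Sig t ** diag_mat (S t))))
                     *\<^sub>R (diag_mat (S t) ** Sig t ** diag_mat (S t)))
                  ** matrix_inv (diag_mat (S t)))) \<le> Delta)))"
proof -
  define N where "N eps t = opnorm (matrix_inv (mat 1 +
                  ((gamma / (eps * q (S t) (diag_mat (S t) ** Sig t ** diag_mat (S t))))
                     *\<^sub>R (diag_mat (S t) ** Sig t ** diag_mat (S t)))
                  ** matrix_inv (diag_mat (S t))))" for eps t
  have c: "0 < cmin C"
    using C_rank by (rule cmin_pos)
  have N_le: "N eps t \<le> eps * chi / (gamma * cmin C * slow)" if "0 < eps" "1 \<le> t" for eps t
  proof -
    obtain k where t: "t = Suc k"
      using \<open>1 \<le> t\<close> by (cases t) auto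
    have "\<forall>i. slow \<le> S t $ i"
      using S_Suc h_low t by simp
    moreover have "\<forall>v. cmin C * (norm v)\<^sup>2 \<le> v \<bullet> (Sig t *v v)"
      using covariance_ge_cmin[OF _ Sig_Suc] Sig_0 Sigma0_pd t by simp
    ultimately show ?thesis
      unfolding N_def using slow_pos c gamma_pos \<open>0 < eps\<close> q_bounds
      by (intro opnorm_inv_resolvent_le_eps) auto
  qed
  have chi: "1 \<le> chi"
    using q_bounds by (meson order_trans)
  have slow_le_hsup: "slow \<le> hsup h"
    using abs_le_hsup[OF h_bdd, of 0 0] h_low by (metis abs_ge_self order_trans)
  show ?thesis
    unfolding N_def[symmetric] Let_def
  proof (intro conjI allI impI)
    fix eps :: real and t :: nat
    assume eps: "0 < eps \<and> eps * chi * hsup h < gamma * slow\<^sup>2 * cmin C" and "1 \<le> t"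
    have "eps * chi / (gamma * cmin C * slow) \<le> eps * (chi * hsup h / (gamma * slow\<^sup>2 * cmin C))
               / (1 - eps\<^sup>2 * (chi * hsup h / (gamma * slow\<^sup>2 * cmin C))\<^sup>2)"
      using eps chi gamma_pos c slow_pos slow_le_hsup by (intro le_kappa_div_one_minus_square) auto
    with N_le[of eps t] eps \<open>1 \<le> t\<close> show "N eps t \<le> \<dots>"
      by linarith
  next
    fix delta :: real
    assume "0 \<le> delta \<and> delta < 1"
    moreover have "0 < chi / (gamma * cmin C * slow)"
      using chi gamma_pos c slow_pos by simp
    moreover have "N eps t \<le> eps * (chi / (gamma * cmin C * slow))" if "0 < eps" "1 \<le> t" for eps t
      using N_le[OF that] by simp
    ultimately show "\<exists>eps0>0. \<forall>eps. 0 < eps \<and> eps < eps0 \<longrightarrow> (\<exists>Delta<1. \<forall>t\<ge>1. delta * N eps t \<le> Delta)"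
      by (intro uniform_contraction_for_small_eps) auto
  qed
qed

end
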